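(* Let $\mathfrak{n}$ be the real $7$-dimensional Lie algebra with basis $e_1,\dots,e_7$ whose nonzero brackets (up to antisymmetry) are $[e_1,e_2]=e_4$, $[e_1,e_3]=e_5$, $[e_1,e_4]=e_6$, $[e_1,e_6]=e_7$, $[e_2,e_3]=e_6$, $[e_2,e_5]=e_7$, $[e_3,e_5]=e_7$. Then $\mathfrak{n}$ is not an Einstein nilradical.
   Context: A real nilpotent Lie algebra $\mathfrak{n}$ is called an Einstein nilradical if it admits an inner product such that the left-invariant Riemannian metric it defines on the simply connected nilpotent Lie group with Lie algebra $\mathfrak{n}$ is a nilsoliton, i.e. its Ricci operator satisfies $\mathrm{Ric}=c\,\mathrm{Id}+D$ for some $c\in\mathbb{R}$ and some derivation $D$ of $\mathfrak{n}$. Brackets of basis elements not listed are zero. *)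

theory Defs
  imports "HOL-Analysis.Analysis"
begin

datatype idx = E1 | E2 | E3 | E4 | E5 | E6 | E7

lemma UNIV_idx: "(UNIV :: idx set) = {E1, E2, E3, E4, E5, E6, E7}"
  by (auto intro: idx.exhaust)

instance idx :: finite
  by standard (simp add: UNIV_idx)

type_synonym vec7 = "real ^ idx"

definition e :: "idx \<Rightarrow> vec7" where
  "e i = axis i 1"

fun nbr :: "idx \<Rightarrow> idx \<Rightarrow> vec7" where
  "nbr E1 E2 = e E4" | "nbr E2 E1 = - e E4"
| "nbr E1 E3 = e E5" | "nbr E3 E1 = - e E5"
| "nbr E1 E4 = e E6" | "nbr E4 E1 = - e E6"
| "nbr E1 E6 = e E7" | "nbr E6 E1 = - e E7"
| "nbr E2 E3 = e E6" | "nbr E3 E2 = - e E6"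
| "nbr E2 E5 = e E7" | "nbr E5 E2 = - e E7"
| "nbr E3 E5 = e E7" | "nbr E5 E3 = - e E7"
| "nbr _ _ = 0"

definition n_bracket :: "vec7 \<Rightarrow> vec7 \<Rightarrow> vec7" where
  "n_bracket x y = (\<Sum>i\<in>UNIV. \<Sum>j\<in>UNIV. (x $ i * y $ j) *\<^sub>R nbr i j)"

definition is_inner_product :: "(real ^ 'n \<Rightarrow> real ^ 'n \<Rightarrow> real) \<Rightarrow> bool" where
  "is_inner_product ip \<longleftrightarrow>
     (\<forall>x y. ip x y = ip y x) \<and> (\<forall>y. linear (\<lambda>x. ip x y)) \<and> (\<forall>x. x \<noteq> 0 \<longrightarrow> ip x x > 0)"

definition orthonormal_basis ::
  "(real ^ 'n \<Rightarrow> real ^ 'n \<Rightarrow> real) \<Rightarrow> ('n \<Rightarrow> real ^ 'n) \<Rightarrow> bool" where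
  "orthonormal_basis ip b \<longleftrightarrow> (\<forall>i j. ip (b i) (b j) = (if i = j then 1 else 0))"

text \<open>Ricci form of the left-invariant metric of a nilpotent metric Lie algebra, computed
  in an orthonormal basis b (standard formula, e.g. Lauret):
  <Ric X, Y> = -1/2 sum_ij <[X,b_i],b_j><[Y,b_i],b_j> + 1/4 sum_ij <[b_i,b_j],X><[b_i,b_j],Y>.\<close>
definition ricci_form ::
  "(real ^ 'n \<Rightarrow> real ^ 'n \<Rightarrow> real ^ 'n) \<Rightarrow> (real ^ 'n \<Rightarrow> real ^ 'n \<Rightarrow> real)
    \<Rightarrow> ('n::finite \<Rightarrow> real ^ 'n) \<Rightarrow> real ^ 'n \<Rightarrow> real ^ 'n \<Rightarrow> real" where
  "ricci_form br ip b X Y =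
     - (1/2) * (\<Sum>i\<in>UNIV. \<Sum>j\<in>UNIV. ip (br X (b i)) (b j) * ip (br Y (b i)) (b j))
     + (1/4) * (\<Sum>i\<in>UNIV. \<Sum>j\<in>UNIV. ip (br (b i) (b j)) X * ip (br (b i) (b j)) Y)"

definition ricci_op ::
  "(real ^ 'n \<Rightarrow> real ^ 'n \<Rightarrow> real ^ 'n) \<Rightarrow> (real ^ 'n \<Rightarrow> real ^ 'n \<Rightarrow> real)
    \<Rightarrow> ('n::finite \<Rightarrow> real ^ 'n) \<Rightarrow> real ^ 'n \<Rightarrow> real ^ 'n" where
  "ricci_op br ip b X = (\<Sum>k\<in>UNIV. ricci_form br ip b X (b k) *\<^sub>R b k)"

definition is_derivation ::
  "(real ^ 'n \<Rightarrow> real ^ 'n \<Rightarrow> real ^ 'n) \<Rightarrow> (real ^ 'n \<Rightarrow> real ^ 'n) \<Rightarrow> bool" where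
  "is_derivation br D \<longleftrightarrow> linear D \<and> (\<forall>x y. D (br x y) = br (D x) y + br x (D y))"

definition is_nilsoliton ::
  "(real ^ 'n \<Rightarrow> real ^ 'n \<Rightarrow> real ^ 'n) \<Rightarrow> (real ^ 'n \<Rightarrow> real ^ 'n \<Rightarrow> real) \<Rightarrow> bool" where
  "is_nilsoliton br ip \<longleftrightarrow>
     (\<exists>b::'n::finite \<Rightarrow> real ^ 'n. orthonormal_basis ip b \<and>
        (\<exists>c D. is_derivation br D \<and> ricci_op br ip b = (\<lambda>X. c *\<^sub>R X + D X)))"

definition einstein_nilradical :: "(real ^ 'n::finite \<Rightarrow> real ^ 'n \<Rightarrow> real ^ 'n) \<Rightarrow> bool" where
  "einstein_nilradical br \<longleftrightarrow> (\<exists>ip. is_inner_product ip \<and> is_nilsoliton br ip)"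

end

theory Submission
  imports Defs
begin

text \<open>Suppose \<open>Ric = c Id + D\<close> with \<open>D\<close> a derivation; then \<open>D\<close> is symmetric. Every derivation of this
  algebra preserves a flag with one-dimensional steps and acts on the successive quotients by the
  scalars \<open>s w\<close>, where \<open>w = (1, 2, 2, 3, 3, 4, 5)\<close>. Hence an orthonormal basis \<open>B\<close> adapted to the
  flag (Gram--Schmidt) diagonalises \<open>D\<close>, and \<open>Ric(B k, B k) = c + s w k\<close>. For any weights \<open>m\<close>, the
  structure constants \<open>C i j k\<close> of \<open>B\<close> satisfy
  \<open>\<Sum>k m k Ric(B k, B k) = 1/4 \<Sum>i j k (C i j k)\<^sup>2 (m k - m i - m j)\<close>.
  If \<open>\<Sum> m = 0\<close> and \<open>s \<Sum> m k w k = 0\<close> the left side vanishes, whereas for a suitable \<open>m\<close> every term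
  on the right is nonnegative and the term of \<open>C E1 E2 E4 \<noteq> 0\<close> is positive:
  \<open>m = (-1, -2, 2, 1, 1, 0, -1)\<close> if \<open>s \<noteq> 0\<close> (then only brackets compatible with the grading \<open>w\<close>
  survive), and \<open>m = - e E1 + e E7\<close> if \<open>s = 0\<close> (\<open>B E1\<close> is orthogonal to the derived algebra and
  \<open>B E7\<close> is central).\<close>

lemma sum3_pos:
  fixes G :: "'a::finite \<Rightarrow> 'b::finite \<Rightarrow> 'c::finite \<Rightarrow> real"
  assumes "\<And>i j k. 0 \<le> G i j k" and "0 < G a b c"
  shows "0 < (\<Sum>i\<in>UNIV. \<Sum>j\<in>UNIV. \<Sum>k\<in>UNIV. G i j k)"
  using assms by (intro sum_pos2[of UNIV a] sum_pos2[of UNIV b] sum_pos2[of UNIV c] sum_nonneg) auto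

lemma bilinear_mult_linear:
  fixes f g :: "'a::real_vector \<Rightarrow> real"
  assumes "linear f" "linear g"
  shows "bilinear (\<lambda>x y. f x * g y)"
  using assms by (auto simp: bilinear_def linear_iff algebra_simps)

section \<open>Inner products and orthonormal bases\<close>

locale inner_product_form =
  fixes ip :: "real ^ 'n::finite \<Rightarrow> real ^ 'n \<Rightarrow> real"
  assumes is_inner_product: "is_inner_product ip"
begin

lemma ip_sym: "ip x y = ip y x"
  using is_inner_product by (simp add: is_inner_product_def)

lemma ip_self_pos: "x \<noteq> 0 \<Longrightarrow> 0 < ip x x"
  using is_inner_product by (simp add: is_inner_product_def)

lemma bilinear_ip: "bilinear ip"
  using is_inner_product unfolding bilinear_def is_inner_product_def
  by (metis (no_types) ip_sym ext)

lemma ip_simps [simp]: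
  "ip (x + y) z = ip x z + ip y z" "ip x (y + z) = ip x y + ip x z"
  "ip (x - y) z = ip x z - ip y z" "ip x (y - z) = ip x y - ip x z"
  "ip (a *\<^sub>R x) z = a * ip x z" "ip x (a *\<^sub>R z) = a * ip x z"
  "ip (- x) z = - ip x z" "ip x (- z) = - ip x z"
  "ip 0 z = 0" "ip x 0 = 0"
  "ip (sum f S) z = (\<Sum>i\<in>S. ip (f i) z)" "ip z (sum f S) = (\<Sum>i\<in>S. ip z (f i))"
  using bilinear_ip
  by (simp_all add: bilinear_ladd bilinear_radd bilinear_lsub bilinear_rsub bilinear_lmul
      bilinear_rmul bilinear_lneg bilinear_rneg bilinear_lzero bilinear_rzero
      linear_sum[of "\<lambda>x. ip x z"] linear_sum[of "\<lambda>x. ip z x"] bilinear_def)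

lemma ip_self_eq_0_iff: "ip x x = 0 \<longleftrightarrow> x = 0"
  using ip_self_pos[of x] by (cases "x = 0") auto

lemma card_le_of_orthogonal:
  fixes v :: "'a::finite \<Rightarrow> real ^ 'n"
  assumes orth: "\<And>p q. p \<noteq> q \<Longrightarrow> ip (v p) (v q) = 0" and nonzero: "\<And>p. v p \<noteq> 0"
  shows "CARD('a) \<le> CARD('n)"
proof -
  have "inj v"
    by (rule injI) (metis orth nonzero ip_self_eq_0_iff)
  have "independent (range v)"
    unfolding independent_explicit
  proof (intro conjI allI impI ballI)
    fix c w assume sum0: "(\<Sum>w\<in>range v. c w *\<^sub>R w) = 0" and "w \<in> range v"
    then obtain q where q: "w = v q" by auto
    have "0 = ip (\<Sum>p\<in>UNIV. c (v p) *\<^sub>R v p) (v q)"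
      using sum0 by (simp add: sum.reindex[OF \<open>inj v\<close>])
    also have "\<dots> = c (v q) * ip (v q) (v q)"
      by (simp add: sum.remove[of UNIV q] orth)
    finally show "c w = 0" using q nonzero ip_self_eq_0_iff by auto
  qed simp
  then have "card (range v) \<le> DIM(real ^ 'n)" using independent_bound by blast
  then show ?thesis using card_image[OF \<open>inj v\<close>] by simp
qed

lemma orthonormal_basis_expansion:
  assumes b: "orthonormal_basis ip b"
  shows "x = (\<Sum>i\<in>UNIV. ip x (b i) *\<^sub>R b i)"
proof (rule ccontr)
  define y where "y = x - (\<Sum>i\<in>UNIV. ip x (b i) *\<^sub>R b i)"
  assume "x \<noteq> (\<Sum>i\<in>UNIV. ip x (b i) *\<^sub>R b i)"
  then have "y \<noteq> 0" by (simp add: y_def)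
  have bb: "ip (b i) (b j) = (if i = j then 1 else 0)" for i j
    using b by (simp add: orthonormal_basis_def)
  have yb: "ip y (b j) = 0" for j
    by (simp add: y_def bb if_distrib cong: if_cong)
  (* together with the b i, y would give CARD('n) + 1 pairwise orthogonal nonzero vectors *)
  have "CARD('n option) \<le> CARD('n)"
  proof (rule card_le_of_orthogonal)
    show "ip (case_option y b p) (case_option y b q) = 0" if "p \<noteq> q" for p q
      using that by (cases p; cases q) (auto simp: yb bb ip_sym[of "b _" y])
    show "case_option y b p \<noteq> 0" for p
      using \<open>y \<noteq> 0\<close> bb[of "the p" "the p"] by (cases p) auto
  qed
  then show False by simp
qed

lemma orthonormal_basis_ip:
  assumes "orthonormal_basis ip b"
  shows "ip x y = (\<Sum>i\<in>UNIV. ip x (b i) * ip y (b i))"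
  by (subst orthonormal_basis_expansion[OF assms, of x]) (simp add: ip_sym[of "b _" y])

lemma bilinear_expansion:
  fixes \<beta> :: "real ^ 'n \<Rightarrow> real ^ 'n \<Rightarrow> real"
  assumes B: "orthonormal_basis ip B" and \<beta>: "bilinear \<beta>"
  shows "\<beta> x y = (\<Sum>k\<in>UNIV. \<Sum>l\<in>UNIV. ip x (B k) * ip y (B l) * \<beta> (B k) (B l))"
proof -
  have "\<beta> x y = \<beta> (\<Sum>k\<in>UNIV. ip x (B k) *\<^sub>R B k) (\<Sum>l\<in>UNIV. ip y (B l) *\<^sub>R B l)"
    using orthonormal_basis_expansion[OF B] by metis
  also have "\<dots> = (\<Sum>k\<in>UNIV. \<Sum>l\<in>UNIV. ip x (B k) * ip y (B l) * \<beta> (B k) (B l))"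
    by (simp add: bilinear_sum[OF \<beta>] sum.cartesian_product bilinear_lmul[OF \<beta>] bilinear_rmul[OF \<beta>]
        mult_ac)
  finally show ?thesis .
qed

lemma bilinear_trace_basis_indep:
  fixes \<beta> :: "real ^ 'n \<Rightarrow> real ^ 'n \<Rightarrow> real"
  assumes b: "orthonormal_basis ip b" and B: "orthonormal_basis ip B" and \<beta>: "bilinear \<beta>"
  shows "(\<Sum>i\<in>UNIV. \<beta> (b i) (b i)) = (\<Sum>i\<in>UNIV. \<beta> (B i) (B i))"
proof -
  have "(\<Sum>i\<in>UNIV. \<beta> (b i) (b i))
      = (\<Sum>i\<in>UNIV. \<Sum>k\<in>UNIV. \<Sum>l\<in>UNIV. ip (b i) (B k) * ip (b i) (B l) * \<beta> (B k) (B l))"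
    by (rule sum.cong[OF refl], rule bilinear_expansion[OF B \<beta>])
  also have "\<dots> = (\<Sum>k\<in>UNIV. \<Sum>l\<in>UNIV. \<Sum>i\<in>UNIV. ip (b i) (B k) * ip (b i) (B l) * \<beta> (B k) (B l))"
    by (subst sum.swap, rule sum.cong[OF refl], rule sum.swap)
  also have "\<dots> = (\<Sum>k\<in>UNIV. \<Sum>l\<in>UNIV. (\<Sum>i\<in>UNIV. ip (b i) (B k) * ip (b i) (B l)) * \<beta> (B k) (B l))"
    by (simp add: sum_distrib_right)
  also have "\<dots> = (\<Sum>k\<in>UNIV. \<Sum>l\<in>UNIV. ip (B k) (B l) * \<beta> (B k) (B l))"
  proof -
    have "(\<Sum>i\<in>UNIV. ip (b i) (B k) * ip (b i) (B l)) = ip (B k) (B l)" for k l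
      using orthonormal_basis_ip[OF b, of "B k" "B l"] by (simp add: ip_sym[of "b _"])
    then show ?thesis by simp
  qed
  also have "\<dots> = (\<Sum>i\<in>UNIV. \<beta> (B i) (B i))"
  proof -
    have BB: "ip (B k) (B l) = (if k = l then 1 else 0)" for k l
      using B by (simp add: orthonormal_basis_def)
    show ?thesis unfolding BB by (simp add: mult_delta_left)
  qed
  finally show ?thesis .
qed

section \<open>The Ricci form and nilsolitons\<close>

lemma double_trace_basis_indep:
  fixes \<phi> \<psi> :: "real ^ 'n \<Rightarrow> real ^ 'n \<Rightarrow> real"
  assumes b: "orthonormal_basis ip b" and B: "orthonormal_basis ip B"
    and \<phi>: "bilinear \<phi>" and \<psi>: "bilinear \<psi>"
  shows "(\<Sum>i\<in>UNIV. \<Sum>j\<in>UNIV. \<phi> (b i) (b j) * \<psi> (b i) (b j))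
       = (\<Sum>i\<in>UNIV. \<Sum>j\<in>UNIV. \<phi> (B i) (B j) * \<psi> (B i) (B j))"
proof -
  have lin: "linear (\<phi> x)" "linear (\<psi> x)" "linear (\<lambda>y. \<phi> y x)" "linear (\<lambda>y. \<psi> y x)" for x
    using \<phi> \<psi> by (auto simp: bilinear_def)
  have "(\<Sum>i\<in>UNIV. \<Sum>j\<in>UNIV. \<phi> (b i) (b j) * \<psi> (b i) (b j))
      = (\<Sum>i\<in>UNIV. \<Sum>j\<in>UNIV. \<phi> (b i) (B j) * \<psi> (b i) (B j))"
    by (intro sum.cong refl bilinear_trace_basis_indep[OF b B] bilinear_mult_linear lin)
  also have "\<dots> = (\<Sum>j\<in>UNIV. \<Sum>i\<in>UNIV. \<phi> (b i) (B j) * \<psi> (b i) (B j))"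
    by (rule sum.swap)
  also have "\<dots> = (\<Sum>j\<in>UNIV. \<Sum>i\<in>UNIV. \<phi> (B i) (B j) * \<psi> (B i) (B j))"
    by (intro sum.cong refl bilinear_trace_basis_indep[OF b B] bilinear_mult_linear lin)
  also have "\<dots> = (\<Sum>i\<in>UNIV. \<Sum>j\<in>UNIV. \<phi> (B i) (B j) * \<psi> (B i) (B j))"
    by (rule sum.swap)
  finally show ?thesis .
qed

lemma ricci_form_basis_indep:
  assumes br: "bilinear br" and b: "orthonormal_basis ip b" and B: "orthonormal_basis ip B"
  shows "ricci_form br ip b = ricci_form br ip B"
proof (intro ext)
  fix X Y
  have "bilinear (\<lambda>p q. ip (br Z p) q)" "bilinear (\<lambda>p q. ip (br p q) Z)" for Z
    by (auto simp: bilinear_def linear_iff bilinear_radd[OF br] bilinear_rmul[OF br]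
        bilinear_ladd[OF br] bilinear_lmul[OF br])
  then show "ricci_form br ip b X Y = ricci_form br ip B X Y"
    unfolding ricci_form_def
    using double_trace_basis_indep[OF b B, of "\<lambda>p q. ip (br X p) q" "\<lambda>p q. ip (br Y p) q"]
      double_trace_basis_indep[OF b B, of "\<lambda>p q. ip (br p q) X" "\<lambda>p q. ip (br p q) Y"]
    by simp
qed

lemma ricci_form_sym: "ricci_form br ip b X Y = ricci_form br ip b Y X"
  unfolding ricci_form_def by (simp add: mult.commute)

lemma linear_ricci_form:
  assumes br: "bilinear br"
  shows "linear (ricci_form br ip b X)"
  by (intro linearI) (simp_all add: ricci_form_def bilinear_ladd[OF br] bilinear_lmul[OF br]
      algebra_simps sum.distrib sum_distrib_left)

lemma ip_ricci_op:
  assumes br: "bilinear br" and b: "orthonormal_basis ip b"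
  shows "ip (ricci_op br ip b X) Y = ricci_form br ip b X Y"
proof -
  have "ricci_form br ip b X Y = ricci_form br ip b X (\<Sum>k\<in>UNIV. ip Y (b k) *\<^sub>R b k)"
    using orthonormal_basis_expansion[OF b] by metis
  also have "\<dots> = (\<Sum>k\<in>UNIV. ricci_form br ip b X (b k) * ip (b k) Y)"
    by (simp add: linear_sum[OF linear_ricci_form[OF br]] linear_scale[OF linear_ricci_form[OF br]]
        ip_sym[of Y] mult.commute)
  finally show ?thesis by (simp add: ricci_op_def)
qed

lemma ricci_weighted_trace:
  assumes anti: "\<And>x y. br y x = - br x y"
  shows "(\<Sum>k\<in>UNIV. m k * ricci_form br ip b (b k) (b k))
       = 1/4 * (\<Sum>i\<in>UNIV. \<Sum>j\<in>UNIV. \<Sum>k\<in>UNIV. (ip (br (b i) (b j)) (b k))\<^sup>2 * (m k - m i - m j))"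
proof -
  define C where "C i j k = ip (br (b i) (b j)) (b k)" for i j k
  have C_anti: "(C j i k)\<^sup>2 = (C i j k)\<^sup>2" for i j k
    by (simp add: C_def anti[of "b i"])
  define S where "S = (\<Sum>k\<in>UNIV. m k * (\<Sum>i\<in>UNIV. \<Sum>j\<in>UNIV. (C i j k)\<^sup>2))"
  define T where "T = (\<Sum>k\<in>UNIV. m k * (\<Sum>i\<in>UNIV. \<Sum>j\<in>UNIV. (C k i j)\<^sup>2))"
  have "(\<Sum>k\<in>UNIV. m k * ricci_form br ip b (b k) (b k)) = - (1/2) * T + 1/4 * S"
    by (simp add: ricci_form_def S_def T_def C_def power2_eq_square sum.distrib sum_distrib_left
        algebra_simps)
  moreover have "(\<Sum>i\<in>UNIV. \<Sum>j\<in>UNIV. \<Sum>k\<in>UNIV. (C i j k)\<^sup>2 * m k) = S"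
    unfolding S_def sum_distrib_left
    by (subst sum.swap, rule sum.cong[OF refl], subst sum.swap) (simp add: mult.commute)
  moreover have "(\<Sum>i\<in>UNIV. \<Sum>j\<in>UNIV. \<Sum>k\<in>UNIV. (C i j k)\<^sup>2 * m i) = T"
    unfolding T_def by (simp add: sum_distrib_left sum_distrib_right mult.commute)
  moreover have "(\<Sum>i\<in>UNIV. \<Sum>j\<in>UNIV. \<Sum>k\<in>UNIV. (C i j k)\<^sup>2 * m j) = T"
    unfolding T_def sum_distrib_left
    by (subst sum.swap) (simp add: C_anti sum_distrib_right mult.commute)
  ultimately show ?thesis
    by (simp add: C_def right_diff_distrib sum_subtractf)
qed

lemma nilsoliton_ricci_form:
  assumes br: "bilinear br" and b: "orthonormal_basis ip b" and B: "orthonormal_basis ip B"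
    and sol: "ricci_op br ip b = (\<lambda>X. c *\<^sub>R X + D X)"
  shows "ricci_form br ip B x y = c * ip x y + ip (D x) y"
  using ip_ricci_op[OF br b, of x y] ricci_form_basis_indep[OF br b B] sol by simp

lemma nilsoliton_derivation_symmetric:
  assumes br: "bilinear br" and b: "orthonormal_basis ip b"
    and sol: "ricci_op br ip b = (\<lambda>X. c *\<^sub>R X + D X)"
  shows "ip (D x) y = ip x (D y)"
  using nilsoliton_ricci_form[OF br b b sol, of x y] nilsoliton_ricci_form[OF br b b sol, of y x]
  by (simp add: ricci_form_sym[of br b x y] ip_sym[of x y] ip_sym[of "D y" x])

lemma nilsoliton_weight_obstruction:
  assumes br: "bilinear br" and anti: "\<And>x y. br y x = - br x y"
    and b: "orthonormal_basis ip b" and sol: "ricci_op br ip b = (\<lambda>X. c *\<^sub>R X + D X)"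
    and B: "orthonormal_basis ip B" and eigen: "\<And>i. D (B i) = \<sigma> i *\<^sub>R B i"
    and sums: "(\<Sum>i\<in>UNIV. m i) = 0" "(\<Sum>i\<in>UNIV. m i * \<sigma> i) = 0"
    and mono: "\<And>i j k. ip (br (B i) (B j)) (B k) \<noteq> 0 \<Longrightarrow> m i + m j \<le> m k"
    and strict: "ip (br (B p) (B q)) (B r) \<noteq> 0" "m p + m q < m r"
  shows False
proof -
  have "ricci_form br ip B (B i) (B i) = c + \<sigma> i" for i
    using nilsoliton_ricci_form[OF br b B sol] eigen B by (simp add: orthonormal_basis_def)
  then have "(\<Sum>k\<in>UNIV. m k * ricci_form br ip B (B k) (B k))
      = c * (\<Sum>i\<in>UNIV. m i) + (\<Sum>i\<in>UNIV. m i * \<sigma> i)"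
    by (simp add: algebra_simps sum.distrib sum_distrib_left)
  moreover have "0 < (\<Sum>i\<in>UNIV. \<Sum>j\<in>UNIV. \<Sum>k\<in>UNIV. (ip (br (B i) (B j)) (B k))\<^sup>2 * (m k - m i - m j))"
  proof (rule sum3_pos)
    show "0 \<le> (ip (br (B i) (B j)) (B k))\<^sup>2 * (m k - m i - m j)" for i j k
      using mono[of i j k] by (cases "ip (br (B i) (B j)) (B k) = 0") auto
    show "0 < (ip (br (B p) (B q)) (B r))\<^sup>2 * (m r - m p - m q)"
      using strict by simp
  qed
  ultimately show False
    using ricci_weighted_trace[OF anti, where m = m and b = B] sums by simp
qed

lemma derivation_eigenbasis_bracket:
  assumes der: "is_derivation br D" and br: "bilinear br"
    and sym: "\<And>x y. ip (D x) y = ip x (D y)" and eigen: "\<And>i. D (B i) = \<sigma> i *\<^sub>R B i"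
    and "\<sigma> k \<noteq> \<sigma> i + \<sigma> j"
  shows "ip (br (B i) (B j)) (B k) = 0"
proof -
  have "D (br (B i) (B j)) = (\<sigma> i + \<sigma> j) *\<^sub>R br (B i) (B j)"
    using der eigen by (simp add: is_derivation_def bilinear_lmul[OF br] bilinear_rmul[OF br]
        scaleR_add_left)
  then have "(\<sigma> i + \<sigma> j) * ip (br (B i) (B j)) (B k) = \<sigma> k * ip (br (B i) (B j)) (B k)"
    using sym[of "br (B i) (B j)" "B k"] eigen[of k] by simp
  then show ?thesis using \<open>\<sigma> k \<noteq> \<sigma> i + \<sigma> j\<close> by simp
qed

section \<open>Orthonormal bases adapted to a flag\<close>

definition flag_adapted :: "(nat \<Rightarrow> (real ^ 'n) set) \<Rightarrow> (nat \<Rightarrow> real ^ 'n) \<Rightarrow> nat \<Rightarrow> bool" where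
  "flag_adapted V B k \<longleftrightarrow> ip (B k) (B k) = 1 \<and> B k \<in> V k \<and> (\<forall>x\<in>V (Suc k). ip (B k) x = 0)"

lemma flag_adapted_orthonormal:
  assumes V: "antimono V" and i: "flag_adapted V B i" and j: "flag_adapted V B j"
  shows "ip (B i) (B j) = (if i = j then 1 else 0)"
proof -
  have "ip (B p) (B q) = 0" if "flag_adapted V B p" "flag_adapted V B q" "p < q" for p q
    using that antimonoD[OF V, of "Suc p" q] by (auto simp: flag_adapted_def)
  from this[OF i j] this[OF j i] show ?thesis
    using i ip_sym[of "B i" "B j"] by (auto simp: flag_adapted_def linorder_neq_iff)
qed

lemma flag_adapted_ip_gen:
  assumes "flag_adapted V B k" and "x - a *\<^sub>R g \<in> V (Suc k)"
  shows "ip x (B k) = a * ip g (B k)"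
proof -
  have "ip (B k) (x - a *\<^sub>R g) = 0" using assms by (auto simp: flag_adapted_def)
  then show ?thesis by (simp add: ip_sym[of x] ip_sym[of g])
qed

lemma flag_adapted_leading_coeff_nonzero:
  assumes "flag_adapted V B k" and "B k - t *\<^sub>R g \<in> V (Suc k)"
  shows "t \<noteq> 0"
  using assms by (auto simp: flag_adapted_def)

lemma flag_adapted_ip_gen_nonzero:
  assumes "flag_adapted V B k" and "\<And>x. x \<in> V k \<Longrightarrow> \<exists>t. x - t *\<^sub>R g \<in> V (Suc k)"
  shows "ip g (B k) \<noteq> 0"
proof -
  obtain t where "B k - t *\<^sub>R g \<in> V (Suc k)"
    using assms by (auto simp: flag_adapted_def)
  then have "1 = t * ip g (B k)"
    using flag_adapted_ip_gen[OF assms(1)] assms(1) by (force simp: flag_adapted_def)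
  then show ?thesis by auto
qed

lemma flag_step_normal:
  assumes sub: "\<And>k. subspace (V k)" and mono: "V (Suc k) \<subseteq> V k"
    and g: "g \<in> V k" "g \<notin> V (Suc k)" and decomp: "\<And>x. x \<in> V k \<Longrightarrow> \<exists>t. x - t *\<^sub>R g \<in> V (Suc k)"
    and S: "finite S" "\<And>l. l \<in> S \<Longrightarrow> B l \<in> V (Suc k)"
    and orthonormal: "\<And>i j. i \<in> S \<Longrightarrow> j \<in> S \<Longrightarrow> ip (B i) (B j) = (if i = j then 1 else 0)"
    and expansion: "\<And>x. x \<in> V (Suc k) \<Longrightarrow> x = (\<Sum>l\<in>S. ip x (B l) *\<^sub>R B l)"
  obtains u where "ip u u = 1" and "u \<in> V k" and "\<And>x. x \<in> V (Suc k) \<Longrightarrow> ip u x = 0"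
    and "\<And>x. x \<in> V k \<Longrightarrow> x - ip x u *\<^sub>R u \<in> V (Suc k)"
proof -
  define s where "s = (\<Sum>l\<in>S. ip g (B l) *\<^sub>R B l)"
  define h where "h = g - s"
  have s_sub: "s \<in> V (Suc k)"
    unfolding s_def by (intro subspace_sum[OF sub] subspace_mul[OF sub] S)
  have h_orth_B: "ip h (B l) = 0" if "l \<in> S" for l
  proof -
    have "ip s (B l) = (\<Sum>i\<in>S. ip g (B i) * (if i = l then 1 else 0))"
      using that by (simp add: s_def orthonormal)
    then show ?thesis using that S by (simp add: h_def mult_delta_right)
  qed
  have h_orth: "ip h x = 0" if "x \<in> V (Suc k)" for x
  proof -
    from expansion[OF that] have "ip h x = ip h (\<Sum>l\<in>S. ip x (B l) *\<^sub>R B l)" by (rule arg_cong)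
    then show ?thesis by (simp add: h_orth_B)
  qed
  have "h \<noteq> 0" using g s_sub by (auto simp: h_def)
  then have h_pos: "0 < ip h h" by (rule ip_self_pos)
  have "h \<in> V k" unfolding h_def using g s_sub mono by (auto intro: subspace_diff[OF sub])
  define u where "u = (1 / sqrt (ip h h)) *\<^sub>R h"
  show thesis
  proof (rule that)
    show "ip u u = 1" "u \<in> V k"
      using h_pos \<open>h \<in> V k\<close> subspace_mul[OF sub] by (auto simp: u_def)
    show "ip u x = 0" if "x \<in> V (Suc k)" for x
      using h_orth[OF that] by (simp add: u_def)
    show "x - ip x u *\<^sub>R u \<in> V (Suc k)" if "x \<in> V k" for x
    proof -
      obtain t where v: "x - t *\<^sub>R g \<in> V (Suc k)" using decomp \<open>x \<in> V k\<close> by blast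
      have "ip (x - t *\<^sub>R g) h = 0" "ip s h = 0"
        using h_orth[OF v] h_orth[OF s_sub] by (simp_all only: ip_sym[of h])
      moreover have "g = h + s" by (simp add: h_def)
      ultimately have "ip x u *\<^sub>R u = t *\<^sub>R h"
        using h_pos by (simp add: u_def algebra_simps)
      then have "x - ip x u *\<^sub>R u = (x - t *\<^sub>R g) + t *\<^sub>R s"
        by (simp add: h_def algebra_simps)
      then show ?thesis
        using v s_sub subspace_add[OF sub] subspace_mul[OF sub] by metis
    qed
  qed
qed

lemma flag_adapted_basis_exists:
  assumes sub: "\<And>k. subspace (V k)" and V: "antimono V" and bot: "V N = {0}"
    and gen: "\<And>k. k < N \<Longrightarrow> g k \<in> V k" and gen_notin: "\<And>k. k < N \<Longrightarrow> g k \<notin> V (Suc k)"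
    and decomp: "\<And>k x. k < N \<Longrightarrow> x \<in> V k \<Longrightarrow> \<exists>t. x - t *\<^sub>R g k \<in> V (Suc k)"
  obtains B where "\<And>k. k < N \<Longrightarrow> flag_adapted V B k"
    and "\<And>x. x \<in> V 0 \<Longrightarrow> x = (\<Sum>l<N. ip x (B l) *\<^sub>R B l)"
proof -
  have "\<exists>B. (\<forall>l\<in>{m..<N}. flag_adapted V B l) \<and> (\<forall>x\<in>V m. x = (\<Sum>l\<in>{m..<N}. ip x (B l) *\<^sub>R B l))"
    if "m \<le> N" for m
    using that
  proof (induction rule: inc_induct)
    case base
    show ?case using bot by auto
  next
    case (step k)
    then obtain B where adapted: "\<forall>l\<in>{Suc k..<N}. flag_adapted V B l"
      and expansion: "\<forall>x\<in>V (Suc k). x = (\<Sum>l\<in>{Suc k..<N}. ip x (B l) *\<^sub>R B l)"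
      by auto
    have B_sub: "B l \<in> V (Suc k)" if "l \<in> {Suc k..<N}" for l
      using adapted that antimonoD[OF V, of "Suc k" l] by (auto simp: flag_adapted_def)
    obtain u where u: "ip u u = 1" "u \<in> V k" "\<And>x. x \<in> V (Suc k) \<Longrightarrow> ip u x = 0"
      and proj: "\<And>x. x \<in> V k \<Longrightarrow> x - ip x u *\<^sub>R u \<in> V (Suc k)"
      using flag_step_normal[OF sub antimonoD[OF V] gen gen_notin decomp _ B_sub
          flag_adapted_orthonormal[OF V adapted[rule_format] adapted[rule_format]]
          expansion[rule_format]] \<open>k < N\<close> by auto
    define B' where "B' = B(k := u)"
    have "\<forall>l\<in>{k..<N}. flag_adapted V B' l"
      using adapted u by (auto simp: B'_def flag_adapted_def)
    moreover have "x = (\<Sum>l\<in>{k..<N}. ip x (B' l) *\<^sub>R B' l)" if "x \<in> V k" for x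
    proof -
      have "x - ip x u *\<^sub>R u = (\<Sum>l\<in>{Suc k..<N}. ip (x - ip x u *\<^sub>R u) (B l) *\<^sub>R B l)"
        using expansion proj[OF that] by blast
      also have "\<dots> = (\<Sum>l\<in>{Suc k..<N}. ip x (B' l) *\<^sub>R B' l)"
        using u(3)[OF B_sub] by (intro sum.cong refl) (auto simp: B'_def)
      finally show ?thesis
        using \<open>k < N\<close> by (simp add: sum.atLeast_Suc_lessThan B'_def algebra_simps)
    qed
    ultimately show ?case by blast
  qed
  from this[of 0] show ?thesis
    using that by (auto simp: atLeast0LessThan)
qed

lemma flag_adapted_eigenvector:
  assumes sub: "\<And>k. subspace (V k)" and V: "antimono V"
    and adapted: "\<And>k. k < N \<Longrightarrow> flag_adapted V B k"
    and expansion: "\<And>x. x \<in> V 0 \<Longrightarrow> x = (\<Sum>l<N. ip x (B l) *\<^sub>R B l)"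
    and decomp: "\<And>k x. k < N \<Longrightarrow> x \<in> V k \<Longrightarrow> \<exists>t. x - t *\<^sub>R g k \<in> V (Suc k)"
    and lin: "linear D" and sym: "\<And>x y. ip (D x) y = ip x (D y)"
    and inv: "\<And>k x. k \<le> N \<Longrightarrow> x \<in> V k \<Longrightarrow> D x \<in> V k"
    and tri: "\<And>k. k < N \<Longrightarrow> D (g k) - \<sigma> k *\<^sub>R g k \<in> V (Suc k)"
    and "k < N"
  shows "D (B k) = \<sigma> k *\<^sub>R B k"
proof -
  define y where "y = D (B k) - \<sigma> k *\<^sub>R B k"
  obtain t where v: "B k - t *\<^sub>R g k \<in> V (Suc k)"
    using decomp[OF \<open>k < N\<close>] adapted[OF \<open>k < N\<close>] by (auto simp: flag_adapted_def)
  have "y = t *\<^sub>R (D (g k) - \<sigma> k *\<^sub>R g k) + (D (B k - t *\<^sub>R g k) - \<sigma> k *\<^sub>R (B k - t *\<^sub>R g k))"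
    by (simp add: y_def linear_diff[OF lin] linear_scale[OF lin] algebra_simps)
  moreover have "D (B k - t *\<^sub>R g k) \<in> V (Suc k)"
    using inv v \<open>k < N\<close> by simp
  ultimately have y_sub: "y \<in> V (Suc k)"
    using tri[OF \<open>k < N\<close>] v by (simp add: subspace_add[OF sub] subspace_diff[OF sub] subspace_mul[OF sub])
  have "ip y (B l) = 0" if "l < N" for l
  proof (cases "l \<le> k")
    case True
    then have "y \<in> V (Suc l)" using y_sub antimonoD[OF V, of "Suc l" "Suc k"] by auto
    then show ?thesis using adapted[OF \<open>l < N\<close>] by (simp add: flag_adapted_def ip_sym[of y])
  next
    case False
    then have "V l \<subseteq> V (Suc k)" using antimonoD[OF V] by simp
    moreover have "B l \<in> V l" "D (B l) \<in> V l"
      using adapted[OF \<open>l < N\<close>] inv \<open>l < N\<close> by (auto simp: flag_adapted_def)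
    ultimately have "ip (B k) (D (B l)) = 0" "ip (B k) (B l) = 0"
      using adapted[OF \<open>k < N\<close>] by (auto simp: flag_adapted_def)
    then show ?thesis by (simp add: y_def sym)
  qed
  moreover have "y \<in> V 0" using y_sub antimonoD[OF V, of 0 "Suc k"] by auto
  ultimately have "y = 0" using expansion[of y] by simp
  then show ?thesis by (simp add: y_def)
qed

end

section \<open>The Lie algebra \<open>n\<close>\<close>

lemma all_idx: "(\<forall>i::idx. P i) \<longleftrightarrow> P E1 \<and> P E2 \<and> P E3 \<and> P E4 \<and> P E5 \<and> P E6 \<and> P E7"
  by (metis idx.exhaust)

lemma sum_idx: "(\<Sum>i\<in>UNIV. f i) = f E1 + f E2 + f E3 + f E4 + f E5 + f E6 + (f E7 :: 'a::comm_monoid_add)"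
  by (simp add: UNIV_idx add.assoc)

lemma e_nth [simp]: "e i $ j = (if j = i then 1 else 0)"
  by (simp add: e_def axis_def)

lemma n_bracket_nth [simp]:
  "n_bracket x y $ E1 = 0" "n_bracket x y $ E2 = 0" "n_bracket x y $ E3 = 0"
  "n_bracket x y $ E4 = x$E1 * y$E2 - x$E2 * y$E1"
  "n_bracket x y $ E5 = x$E1 * y$E3 - x$E3 * y$E1"
  "n_bracket x y $ E6 = x$E1 * y$E4 - x$E4 * y$E1 + x$E2 * y$E3 - x$E3 * y$E2"
  "n_bracket x y $ E7 = x$E1 * y$E6 - x$E6 * y$E1 + x$E2 * y$E5 - x$E5 * y$E2
                        + x$E3 * y$E5 - x$E5 * y$E3"
  by (simp_all add: n_bracket_def sum_idx algebra_simps)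

lemma bilinear_n_bracket: "bilinear n_bracket"
  unfolding bilinear_def by (auto intro!: linearI simp: vec_eq_iff all_idx algebra_simps)

lemma n_bracket_antisym: "n_bracket y x = - n_bracket x y"
  by (simp add: vec_eq_iff all_idx algebra_simps)

lemma n_bracket_self [simp]: "n_bracket x x = 0"
  by (simp add: vec_eq_iff all_idx algebra_simps)

lemma n_bracket_e:
  "n_bracket (e E1) (e E2) = e E4" "n_bracket (e E1) (e E3) = e E5" "n_bracket (e E1) (e E4) = e E6"
  "n_bracket (e E1) (e E5) = 0" "n_bracket (e E1) (e E6) = e E7" "n_bracket (e E1) (e E7) = 0"
  "n_bracket (e E2) (e E3) = e E6" "n_bracket (e E2) (e E4) = 0" "n_bracket (e E2) (e E5) = e E7"
  "n_bracket (e E2) (e E6) = 0" "n_bracket (e E2) (e E7) = 0"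
  "n_bracket (e E3) (e E4) = 0" "n_bracket (e E3) (e E5) = e E7" "n_bracket (e E3) (e E6) = 0"
  "n_bracket (e E3) (e E7) = 0"
  by (simp_all add: vec_eq_iff all_idx)

lemma derivation_coeffs:
  assumes der: "is_derivation n_bracket D"
  shows "D (e E1) $ E1 = D (e E7) $ E7 / 5" "D (e E2) $ E2 = 2 * D (e E7) $ E7 / 5"
    "D (e E3) $ E3 = 2 * D (e E7) $ E7 / 5" "D (e E4) $ E4 = 3 * D (e E7) $ E7 / 5"
    "D (e E5) $ E5 = 3 * D (e E7) $ E7 / 5" "D (e E6) $ E6 = 4 * D (e E7) $ E7 / 5"
    "D (e E2) $ E1 = 0" "D (e E2) $ E3 = 0" "D (e E3) $ E1 = 0" "D (e E3) $ E2 = 0"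
    "D (e E4) $ E1 = 0" "D (e E4) $ E2 = 0" "D (e E4) $ E3 = 0" "D (e E4) $ E5 = 0"
    "D (e E5) $ E1 = 0" "D (e E5) $ E2 = 0" "D (e E5) $ E3 = 0" "D (e E5) $ E4 = 0"
    "D (e E6) $ E1 = 0" "D (e E6) $ E2 = 0" "D (e E6) $ E3 = 0" "D (e E6) $ E4 = 0"
    "D (e E6) $ E5 = 0" "D (e E7) $ E1 = 0" "D (e E7) $ E2 = 0" "D (e E7) $ E3 = 0"
    "D (e E7) $ E4 = 0" "D (e E7) $ E5 = 0" "D (e E7) $ E6 = 0"
proof -
  have D0: "D 0 = 0" using der linear_0 by (auto simp: is_derivation_def)
  have C: "D (n_bracket (e i) (e j)) $ k
      = n_bracket (D (e i)) (e j) $ k + n_bracket (e i) (D (e j)) $ k" for i j k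
    using der by (simp add: is_derivation_def)
  show "D (e E1) $ E1 = D (e E7) $ E7 / 5" "D (e E2) $ E2 = 2 * D (e E7) $ E7 / 5"
    "D (e E3) $ E3 = 2 * D (e E7) $ E7 / 5" "D (e E4) $ E4 = 3 * D (e E7) $ E7 / 5"
    "D (e E5) $ E5 = 3 * D (e E7) $ E7 / 5" "D (e E6) $ E6 = 4 * D (e E7) $ E7 / 5"
    using C[of E1 E2 E4] C[of E1 E3 E5] C[of E1 E4 E6] C[of E1 E6 E7] C[of E2 E3 E6] C[of E3 E5 E7]
      C[of E1 E3 E4] C[of E1 E5 E6]
    by (simp_all add: n_bracket_e D0)
  show "D (e E2) $ E1 = 0" "D (e E2) $ E3 = 0" "D (e E3) $ E1 = 0" "D (e E3) $ E2 = 0"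
    "D (e E4) $ E1 = 0" "D (e E4) $ E2 = 0" "D (e E4) $ E3 = 0" "D (e E4) $ E5 = 0"
    "D (e E5) $ E1 = 0" "D (e E5) $ E2 = 0" "D (e E5) $ E3 = 0" "D (e E5) $ E4 = 0"
    "D (e E6) $ E1 = 0" "D (e E6) $ E2 = 0" "D (e E6) $ E3 = 0" "D (e E6) $ E4 = 0"
    "D (e E6) $ E5 = 0" "D (e E7) $ E1 = 0" "D (e E7) $ E2 = 0" "D (e E7) $ E3 = 0"
    "D (e E7) $ E4 = 0" "D (e E7) $ E5 = 0" "D (e E7) $ E6 = 0"
    using C[of E1 E2 E3] C[of E1 E4 E5] C[of E2 E3 E5] C[of E1 E2 E5] C[of E2 E4 E7]
      C[of E1 E6 E6] C[of E1 E7 E7] C[of E2 E3 E4] C[of E1 E3 E4] C[of E1 E5 E6] C[of E1 E2 E1]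
      C[of E1 E4 E4] C[of E1 E3 E1] C[of E1 E5 E4] C[of E1 E5 E5] C[of E2 E3 E1] C[of E1 E6 E4]
      C[of E1 E7 E6] C[of E1 E4 E3] C[of E1 E6 E1] C[of E1 E7 E4] C[of E1 E7 E5] C[of E1 E6 E5]
    by (simp_all add: n_bracket_e D0)
qed

text \<open>\<open>nflag k\<close> is the span of \<open>nflag_gen k, \<dots>, nflag_gen 6\<close>, described by the vanishing of the
  dual coordinates. Taking \<open>e E3 - e E2\<close> and \<open>e E5 - e E4\<close> rather than \<open>e E3\<close> and \<open>e E5\<close> makes
  \<open>nflag 2\<close> centralize \<open>nflag 3\<close> (lemma \<open>n_bracket_nflag_2_3\<close>), which removes the brackets
  \<open>[B E3, B E4]\<close> and \<open>[B E3, B E5]\<close> that the grading alone would allow.\<close>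

definition nflag :: "nat \<Rightarrow> vec7 set" where
  "nflag k = {x. (1 \<le> k \<longrightarrow> x$E1 = 0) \<and> (2 \<le> k \<longrightarrow> x$E2 + x$E3 = 0) \<and> (3 \<le> k \<longrightarrow> x$E3 = 0)
     \<and> (4 \<le> k \<longrightarrow> x$E4 + x$E5 = 0) \<and> (5 \<le> k \<longrightarrow> x$E5 = 0) \<and> (6 \<le> k \<longrightarrow> x$E6 = 0) \<and> (7 \<le> k \<longrightarrow> x$E7 = 0)}"

definition nflag_gen :: "nat \<Rightarrow> vec7" where
  "nflag_gen k = [e E1, e E2, e E3 - e E2, e E4, e E5 - e E4, e E6, e E7] ! k"

definition nweight :: "nat \<Rightarrow> real" where
  "nweight k = [1, 2, 2, 3, 3, 4, 5] ! k"

lemma less_7_cases: "k < 7 \<Longrightarrow> k = 0 \<or> k = 1 \<or> k = 2 \<or> k = 3 \<or> k = 4 \<or> k = 5 \<or> (k::nat) = 6"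
  by arith

lemma mem_nflag_iff:
  "x \<in> nflag 0"
  "x \<in> nflag (Suc 0) \<longleftrightarrow> x$E1 = 0"
  "x \<in> nflag 2 \<longleftrightarrow> x$E1 = 0 \<and> x$E3 = - x$E2"
  "x \<in> nflag 3 \<longleftrightarrow> x$E1 = 0 \<and> x$E2 = 0 \<and> x$E3 = 0"
  "x \<in> nflag 4 \<longleftrightarrow> x$E1 = 0 \<and> x$E2 = 0 \<and> x$E3 = 0 \<and> x$E5 = - x$E4"
  "x \<in> nflag 5 \<longleftrightarrow> x$E1 = 0 \<and> x$E2 = 0 \<and> x$E3 = 0 \<and> x$E4 = 0 \<and> x$E5 = 0"
  "x \<in> nflag 6 \<longleftrightarrow> x$E1 = 0 \<and> x$E2 = 0 \<and> x$E3 = 0 \<and> x$E4 = 0 \<and> x$E5 = 0 \<and> x$E6 = 0"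
  by (auto simp: nflag_def)

lemma subspace_nflag: "subspace (nflag k)"
  by (auto simp: subspace_def nflag_def algebra_simps simp flip: distrib_left)

lemma antimono_nflag: "antimono nflag"
  by (auto intro!: antimonoI simp: nflag_def)

lemma nflag_7: "nflag 7 = {0}"
  by (auto simp: nflag_def vec_eq_iff all_idx)

lemma nflag_gen_mem: "k < 7 \<Longrightarrow> nflag_gen k \<in> nflag k"
  by (drule less_7_cases) (auto simp: nflag_def nflag_gen_def)

lemma nflag_gen_not_mem: "k < 7 \<Longrightarrow> nflag_gen k \<notin> nflag (Suc k)"
  by (drule less_7_cases) (auto simp: nflag_def nflag_gen_def)

lemma nflag_decomp:
  assumes "k < 7" and "x \<in> nflag k"
  shows "\<exists>t. x - t *\<^sub>R nflag_gen k \<in> nflag (Suc k)"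
proof -
  let ?t = "[x$E1, x$E2 + x$E3, x$E3, x$E4 + x$E5, x$E5, x$E6, x$E7] ! k"
  have "x - ?t *\<^sub>R nflag_gen k \<in> nflag (Suc k)"
    using less_7_cases[OF \<open>k < 7\<close>] \<open>x \<in> nflag k\<close>
    by (elim disjE) (simp_all add: nflag_def nflag_gen_def)
  then show ?thesis ..
qed

lemma linear_nth_expansion:
  fixes D :: "vec7 \<Rightarrow> vec7"
  assumes "linear D"
  shows "D x $ j = (\<Sum>i\<in>UNIV. x$i * D (e i) $ j)"
proof -
  have "x = (\<Sum>i\<in>UNIV. x$i *\<^sub>R e i)"
    by (simp add: vec_eq_iff all_idx sum_idx)
  then have "D x = D (\<Sum>i\<in>UNIV. x$i *\<^sub>R e i)" by (rule arg_cong)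
  then show ?thesis by (simp add: linear_sum[OF assms] linear_scale[OF assms])
qed

lemma derivation_nflag_invariant:
  assumes der: "is_derivation n_bracket D" and "k \<le> 7" and "x \<in> nflag k"
  shows "D x \<in> nflag k"
proof -
  have lin: "linear D" using der by (simp add: is_derivation_def)
  from \<open>k \<le> 7\<close> have "k = 0 \<or> k = 1 \<or> k = 2 \<or> k = 3 \<or> k = 4 \<or> k = 5 \<or> k = 6 \<or> k = 7" by arith
  then show ?thesis using \<open>x \<in> nflag k\<close>
    by (elim disjE) (simp_all add: mem_nflag_iff nflag_7
        linear_nth_expansion[OF lin, of x] sum_idx derivation_coeffs[OF der] linear_0[OF lin])
qed

lemma derivation_nflag_graded:
  assumes der: "is_derivation n_bracket D" and "k < 7"
  shows "D (nflag_gen k) - (D (e E7) $ E7 / 5 * nweight k) *\<^sub>R nflag_gen k \<in> nflag (Suc k)"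
proof -
  have lin: "linear D" using der by (simp add: is_derivation_def)
  from less_7_cases[OF \<open>k < 7\<close>] show ?thesis
    by (elim disjE) (simp_all add: nflag_def nflag_gen_def nweight_def derivation_coeffs[OF der]
        linear_diff[OF lin])
qed

lemma n_bracket_mem_nflag_1: "n_bracket x y \<in> nflag 1"
  by (simp add: mem_nflag_iff)

lemma n_bracket_nflag_6: "z \<in> nflag 6 \<Longrightarrow> n_bracket x z = 0"
  by (simp add: mem_nflag_iff vec_eq_iff all_idx)

lemma n_bracket_nflag_2_3: "x \<in> nflag 2 \<Longrightarrow> y \<in> nflag 3 \<Longrightarrow> n_bracket x y = 0"
  by (simp add: mem_nflag_iff vec_eq_iff all_idx algebra_simps)

lemma n_bracket_leading:
  assumes "x - a *\<^sub>R nflag_gen 0 \<in> nflag 1" and "y - b *\<^sub>R nflag_gen 1 \<in> nflag 2"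
  shows "n_bracket x y - (a * b) *\<^sub>R nflag_gen 3 \<in> nflag 4"
  using assms by (simp add: mem_nflag_iff nflag_gen_def algebra_simps flip: distrib_left)

fun rank :: "idx \<Rightarrow> nat" where
  "rank E1 = 0" | "rank E2 = 1" | "rank E3 = 2" | "rank E4 = 3" | "rank E5 = 4" | "rank E6 = 5"
| "rank E7 = 6"

lemma rank_less: "rank i < 7"
  by (cases i) auto

lemma rank_eq_iff: "rank i = rank j \<longleftrightarrow> i = j"
  by (cases i; cases j) auto

locale n_metric = inner_product_form ip for ip :: "vec7 \<Rightarrow> vec7 \<Rightarrow> real"
begin

lemma nflag_adapted_brackets:
  assumes adapted: "\<And>k. k < 7 \<Longrightarrow> flag_adapted nflag B k"
  shows "ip (n_bracket (B 0) (B 1)) (B 3) \<noteq> 0"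
    and "n_bracket (B 2) (B 3) = 0" and "n_bracket (B 2) (B 4) = 0"
    and "n_bracket x (B 6) = 0" and "ip (n_bracket x y) (B 0) = 0"
proof -
  have mem: "B k \<in> nflag k" if "k < 7" for k
    using adapted[OF that] by (simp add: flag_adapted_def)
  obtain t1 where t1: "B 0 - t1 *\<^sub>R nflag_gen 0 \<in> nflag 1"
    using nflag_decomp[of 0 "B 0"] mem[of 0] by auto
  obtain t2 where t2: "B 1 - t2 *\<^sub>R nflag_gen 1 \<in> nflag 2"
    using nflag_decomp[of 1 "B 1"] mem[of 1] by (auto simp: numeral_2_eq_2)
  have "t1 \<noteq> 0"
    using flag_adapted_leading_coeff_nonzero[OF adapted[of 0]] t1 by simp
  moreover have "t2 \<noteq> 0"
    using flag_adapted_leading_coeff_nonzero[OF adapted[of 1]] t2 by (simp add: numeral_2_eq_2)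
  moreover have "ip (nflag_gen 3) (B 3) \<noteq> 0"
    using flag_adapted_ip_gen_nonzero[OF adapted[of 3]] nflag_decomp[of 3] by simp
  moreover have "ip (n_bracket (B 0) (B 1)) (B 3) = t1 * t2 * ip (nflag_gen 3) (B 3)"
    using flag_adapted_ip_gen[OF adapted[of 3]] n_bracket_leading[OF t1 t2]
    by (simp add: numeral_eq_Suc)
  ultimately show "ip (n_bracket (B 0) (B 1)) (B 3) \<noteq> 0" by simp
  show "n_bracket (B 2) (B 3) = 0" "n_bracket (B 2) (B 4) = 0"
    using mem[of 2] mem[of 3] mem[of 4] antimonoD[OF antimono_nflag, of 3 4]
    by (auto intro: n_bracket_nflag_2_3)
  show "n_bracket x (B 6) = 0"
    using mem[of 6] by (simp add: n_bracket_nflag_6)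
  have "ip (B 0) (n_bracket x y) = 0"
    using adapted[of 0] n_bracket_mem_nflag_1 by (simp add: flag_adapted_def)
  then show "ip (n_bracket x y) (B 0) = 0" by (simp add: ip_sym[of "B 0"])
qed

lemma n_adapted_basis:
  obtains B where "orthonormal_basis ip B"
    and "\<And>D i. is_derivation n_bracket D \<Longrightarrow> (\<And>x y. ip (D x) y = ip x (D y))
           \<Longrightarrow> D (B i) = (D (e E7) $ E7 / 5 * nweight (rank i)) *\<^sub>R B i"
    and "ip (n_bracket (B E1) (B E2)) (B E4) \<noteq> 0"
    and "n_bracket (B E3) (B E4) = 0" and "n_bracket (B E3) (B E5) = 0"
    and "\<And>x. n_bracket x (B E7) = 0" and "\<And>x y. ip (n_bracket x y) (B E1) = 0"
proof -
  obtain B where adapted: "\<And>k. k < 7 \<Longrightarrow> flag_adapted nflag B k"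
    and expansion: "\<And>x. x \<in> nflag 0 \<Longrightarrow> x = (\<Sum>l<7. ip x (B l) *\<^sub>R B l)"
    using flag_adapted_basis_exists[OF subspace_nflag antimono_nflag nflag_7 nflag_gen_mem
        nflag_gen_not_mem nflag_decomp] by blast
  have "orthonormal_basis ip (\<lambda>i. B (rank i))"
    using flag_adapted_orthonormal[OF antimono_nflag adapted adapted] rank_less rank_eq_iff
    by (simp add: orthonormal_basis_def)
  moreover have "D (B (rank i)) = (D (e E7) $ E7 / 5 * nweight (rank i)) *\<^sub>R B (rank i)"
    if der: "is_derivation n_bracket D" and sym: "\<And>x y. ip (D x) y = ip x (D y)" for D i
  proof -
    have "linear D" using der by (simp add: is_derivation_def)
    from flag_adapted_eigenvector[OF subspace_nflag antimono_nflag adapted expansion nflag_decomp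
        this sym derivation_nflag_invariant[OF der] derivation_nflag_graded[OF der] rank_less]
    show ?thesis .
  qed
  ultimately show thesis
    using that[of "\<lambda>i. B (rank i)"] nflag_adapted_brackets[OF adapted] by simp
qed

lemma not_nilsoliton: "\<not> is_nilsoliton n_bracket ip"
proof
  assume "is_nilsoliton n_bracket ip"
  then obtain b c D where b: "orthonormal_basis ip b" and der: "is_derivation n_bracket D"
    and sol: "ricci_op n_bracket ip b = (\<lambda>X. c *\<^sub>R X + D X)"
    unfolding is_nilsoliton_def by blast
  have sym: "\<And>x y. ip (D x) y = ip x (D y)"
    by (rule nilsoliton_derivation_symmetric[OF bilinear_n_bracket b sol])
  obtain B where B: "orthonormal_basis ip B"
    and eigen: "\<And>D i. is_derivation n_bracket D \<Longrightarrow> (\<And>x y. ip (D x) y = ip x (D y))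
           \<Longrightarrow> D (B i) = (D (e E7) $ E7 / 5 * nweight (rank i)) *\<^sub>R B i"
    and C124: "ip (n_bracket (B E1) (B E2)) (B E4) \<noteq> 0"
    and centralizing: "n_bracket (B E3) (B E4) = 0" "n_bracket (B E3) (B E5) = 0"
    and central: "\<And>x. n_bracket x (B E7) = 0"
    and perp: "\<And>x y. ip (n_bracket x y) (B E1) = 0"
    using n_adapted_basis by blast
  define s where "s = D (e E7) $ E7 / 5"
  define \<sigma> where "\<sigma> i = s * nweight (rank i)" for i
  have eigen_D: "D (B i) = \<sigma> i *\<^sub>R B i" for i
    using eigen[OF der sym] by (simp add: \<sigma>_def s_def)
  have obstruction: False
    if "(\<Sum>i\<in>UNIV. m i) = 0" "(\<Sum>i\<in>UNIV. m i * \<sigma> i) = 0"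
      and "\<And>i j k. ip (n_bracket (B i) (B j)) (B k) \<noteq> 0 \<Longrightarrow> m i + m j \<le> m k"
      and "m E1 + m E2 < m E4" for m
    using nilsoliton_weight_obstruction[OF bilinear_n_bracket n_bracket_antisym b sol B eigen_D
        that(1-3) C124 that(4)] .
  show False
  proof (cases "s = 0")
    case True
    have "n_bracket (B E7) x = 0" for x
      using central[of x] n_bracket_antisym[of "B E7" x] by simp
    then have "ip (n_bracket (B i) (B j)) (B k) = 0" if "k = E1 \<or> i = E7 \<or> j = E7" for i j k
      using that by (auto simp: perp central)
    then show False
      by (intro obstruction[of "\<lambda>i. if i = E1 then -1 else if i = E7 then 1 else 0"])
        (auto simp: sum_idx \<sigma>_def True split: if_splits)
  next
    case False
    define m :: "idx \<Rightarrow> real"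
      where "m i = (case i of E1 \<Rightarrow> -1 | E2 \<Rightarrow> -2 | E3 \<Rightarrow> 2 | E4 \<Rightarrow> 1 | E5 \<Rightarrow> 1 | E6 \<Rightarrow> 0 | E7 \<Rightarrow> -1)" for i
    have graded: "ip (n_bracket (B i) (B j)) (B k) = 0"
      if "nweight (rank k) \<noteq> nweight (rank i) + nweight (rank j)" for i j k
      using derivation_eigenbasis_bracket[OF der bilinear_n_bracket sym eigen_D] that False
      by (simp add: \<sigma>_def flip: distrib_left)
    have "n_bracket (B E4) (B E3) = 0" "n_bracket (B E5) (B E3) = 0"
      using centralizing n_bracket_antisym[of "B E3"] by simp_all
    then have "ip (n_bracket (B i) (B j)) (B k) = 0 \<or> m i + m j \<le> m k" for i j k
      using graded centralizing by (cases i; cases j; cases k) (simp_all add: m_def nweight_def)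
    then show False
      by (intro obstruction[of m]) (auto simp: sum_idx m_def \<sigma>_def nweight_def)
  qed
qed

end

theorem mainTheorem2:
  shows "\<not> einstein_nilradical n_bracket"
proof
  assume "einstein_nilradical n_bracket"
  then obtain ip where "is_inner_product ip" and "is_nilsoliton n_bracket ip"
    unfolding einstein_nilradical_def by blast
  then show False
    using n_metric.not_nilsoliton[of ip] by (simp add: n_metric_def inner_product_form_def)
qed

end
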